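(* For every integer $n\ge 1$, \[ \sum_{k=0}^{n}\Big(-\frac{1}{4}\Big)^k\binom{n}{k}\binom{1+2k}{k}\,k\,H_{1+2k} =\frac{3n}{2^{1+2n}(1-4n^2)}\binom{1+2n}{n}\Big\{3H_n-4H_{1+2n}-\frac{16n}{1-4n^2}-\frac{2-14n}{3n}\Big\}+\frac{1}{1+n}. \]
   Context: For an integer $m\ge 0$, $H_m$ denotes the $m$-th harmonic number: $H_0=0$ and $H_m=\sum_{j=1}^m \frac1j$ for $m\ge1$. $\binom{n}{k}$ is the usual binomial coefficient. *)

theory Defs
  imports "HOL-Analysis.Analysis"
begin

end

theory Submission
  imports Defs
begin

text \<open>Creative telescoping. Let S(n) be the left-hand side. Without its harmonic factor the
summand has a Zeilberger certificate for the operator 2n(n+2) N - (2n-1)(n+1). Summing by parts,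
the harmonic increments H(2k+3) - H(2k+1) = 1/(2k+2) + 1/(2k+3) turn the remainder into
U(n+1) + 1, where U(m) = \<Sum>j (-1/4)^j C(m,j) C(2j,j) (j-1)(4j+1); hence
  2n(n+2) S(n+1) - (2n-1)(n+1) S(n) = U(n+1) + 1.
A second certificate evaluates U(m) in closed form. The claimed right-hand side satisfies the
same first-order recurrence and agrees with S(1) = -11/8.\<close>

declare binomial_Suc_Suc [simp del]

lemma real_choose_mult_Suc_comp:
  "real (m choose j) * (real m + 1) = real (Suc m choose j) * (real m + 1 - real j)"
proof (cases "j \<le> Suc m")
  case True
  have "(Suc m - j) * (Suc m choose j) = Suc m * (m choose j)"
    using binomial_absorb_comp[of "Suc m" j] by simp
  then have "real (Suc m - j) * real (Suc m choose j) = real (Suc m) * real (m choose j)"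
    by (metis of_nat_mult)
  with True show ?thesis by (simp add: of_nat_diff algebra_simps)
qed (simp add: binomial_eq_0)

lemma real_choose_mult_Suc:
  "real (m choose j) * (real m + 1) = real (Suc m choose Suc j) * (real j + 1)"
  using arg_cong[OF Suc_times_binomial_eq[of m j], of real] by (simp add: algebra_simps)

lemma odd_central_binomial:
  "real ((1 + 2*k) choose k) * (real k + 1) = (2*real k + 1) * real (2*k choose k)"
proof -
  have "Suc (2*k) choose Suc k = Suc (2*k) choose k"
    using binomial_symmetric[of "Suc k" "Suc (2*k)"] by simp
  then show ?thesis using real_choose_mult_Suc[of "2*k" k] by (simp add: algebra_simps)
qed

lemma central_binomial_Suc: "real (2*Suc k choose Suc k) = 2 * real ((1 + 2*k) choose k)"
proof -
  have "Suc (2*k) choose Suc k = Suc (2*k) choose k"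
    using binomial_symmetric[of "Suc k" "Suc (2*k)"] by simp
  then show ?thesis using binomial_Suc_Suc[of "Suc (2*k)" k] by simp
qed

lemma odd_central_binomial_Suc:
  "real ((1 + 2*Suc k) choose Suc k) * (real k + 2) = 2*(2*real k + 3) * real ((1 + 2*k) choose k)"
  using odd_central_binomial[of "Suc k"] unfolding central_binomial_Suc by (simp add: algebra_simps)

lemma two_real_minus_odd_ne_zero: "2 * real m - real (2*k+1) \<noteq> 0"
proof
  assume "2 * real m - real (2*k+1) = 0"
  then have "real (2*m) = real (2*k+1)" by simp
  then have "2*m = 2*k+1" by (simp only: of_nat_eq_iff)
  then show False by presburger
qed

lemma sum_by_parts_telescoping:
  fixes g h :: "nat \<Rightarrow> 'a::comm_ring"
  shows "(\<Sum>k=0..n. (g (Suc k) - g k) * h k)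
       = g (Suc n) * h (Suc n) - g 0 * h 0 - (\<Sum>k=0..n. g (Suc k) * (h (Suc k) - h k))"
proof -
  have "(\<Sum>k=0..n. (g (Suc k) - g k) * h k)
      = (\<Sum>k=0..n. g (Suc k) * h (Suc k) - g k * h k) - (\<Sum>k=0..n. g (Suc k) * (h (Suc k) - h k))"
    by (simp add: sum_subtractf[symmetric] algebra_simps)
  also have "(\<Sum>k=0..n. g (Suc k) * h (Suc k) - g k * h k) = g (Suc n) * h (Suc n) - g 0 * h 0"
    by (rule sum_Suc_diff) simp
  finally show ?thesis .
qed

text \<open>With \<open>t = (-1/4)\<^sup>j\<close>, \<open>b = C(m+1,j)\<close>, \<open>x = C(m,j)\<close>, \<open>c = C(2j,j)\<close>, \<open>y = C(2j+2,j+1)\<close>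
and \<open>w = j C(m,j-1)\<close>; the inverses \<open>i, i'\<close> let \<open>algebra\<close> divide by \<open>m+1\<close> and \<open>j+1\<close>.\<close>

lemma central_cert_identity:
  fixes m j t b x c y w i i' :: real
  assumes "x*(m+1) = b*(m+1-j)" "y*(j+1) = 2*(2*j+1)*c" "w*(m+1) = j*j*b" "(m+1)*i = 1" "(j+1)*i' = 1"
  shows "(2*m+2)*(6*m^2-m-3)*(t*b*c*(j-1)*(4*j+1)) - (6*m^2+11*m+2)*(2*m-3)*(t*x*c*(j-1)*(4*j+1))
    = t*(-1/4)*(j+1)*x*y*((-4-84*m-72*m^2)+(20+214*m+132*m^2)*(j+1)+(-16-88*m-48*m^2)*(j+1)^2)
      - t*w*c*((-4-84*m-72*m^2)+(20+214*m+132*m^2)*j+(-16-88*m-48*m^2)*j^2)"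
  using assms by algebra

definition central_sum_term :: "nat \<Rightarrow> nat \<Rightarrow> real" where
  "central_sum_term m j = (-1/4)^j * real (m choose j) * real (2*j choose j) * (real j - 1) * (4*real j + 1)"

text \<open>The truncated \<open>j - 1\<close> is harmless: the factor \<open>j\<close> kills the term at \<open>j = 0\<close>.\<close>

definition central_cert :: "nat \<Rightarrow> nat \<Rightarrow> real" where
  "central_cert m j = (-1/4)^j * (real j * real (m choose (j - 1))) * real (2*j choose j)
     * ((-4-84*real m-72*(real m)^2)+(20+214*real m+132*(real m)^2)*real j+(-16-88*real m-48*(real m)^2)*(real j)^2)"

lemma central_cert_telescopes:
  "(2*real m+2)*(6*(real m)^2-real m-3) * central_sum_term (Suc m) j
     - (6*(real m)^2+11*real m+2)*(2*real m-3) * central_sum_term m j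
   = central_cert m (Suc j) - central_cert m j"
proof -
  have y: "real (2*Suc j choose Suc j) * (real j + 1) = 2*(2*real j+1)*real (2*j choose j)"
    using odd_central_binomial[of j] unfolding central_binomial_Suc by (simp add: algebra_simps)
  have w: "real j * real (m choose (j - 1)) * (real m + 1) = real j * real j * real (Suc m choose j)"
    by (cases j) (simp_all add: real_choose_mult_Suc)
  have "(real m + 1) * inverse (real m + 1) = 1" "(real j + 1) * inverse (real j + 1) = 1"
    by (simp_all add: add_pos_pos)
  from central_cert_identity[OF real_choose_mult_Suc_comp y w this, of "(-1/4)^j"]
  show ?thesis unfolding central_sum_term_def central_cert_def by (simp add: algebra_simps)
qed

definition central_sum :: "nat \<Rightarrow> real" where
  "central_sum m = (\<Sum>j=0..m. central_sum_term m j)"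

lemma central_sum_rec:
  "(2*real m+2)*(6*(real m)^2-real m-3) * central_sum (Suc m)
     = (6*(real m)^2+11*real m+2)*(2*real m-3) * central_sum m"
proof -
  have "(2*real m+2)*(6*(real m)^2-real m-3) * central_sum (Suc m)
          - (6*(real m)^2+11*real m+2)*(2*real m-3) * central_sum m
      = (\<Sum>j=0..Suc m. central_cert m (Suc j) - central_cert m j)"
    unfolding central_sum_def sum_distrib_left central_cert_telescopes[symmetric] sum_subtractf
    by (simp add: central_sum_term_def)
  also have "\<dots> = central_cert m (Suc (Suc m)) - central_cert m 0"
    by (rule sum_Suc_diff) simp
  also have "\<dots> = 0"
    by (simp add: central_cert_def)
  finally show ?thesis by simp
qed

lemma central_sum_eq:
  "central_sum m = real (2*m choose m) * (6*(real m)^2 - real m - 3) / ((2*real m - 3)*(2*real m - 1)*4^m)"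
proof (induction m)
  case 0
  then show ?case by (simp add: central_sum_def central_sum_term_def)
next
  case (Suc m)
  define x P where "x = real m" and "P = (4::real)^m"
  have p: "6*x^2 - x - 3 \<noteq> 0"
  proof (cases "m = 0")
    case False
    then have "1 \<le> x" by (simp add: x_def)
    then have "x \<le> x^2" using mult_right_mono[of 1 x x] by (simp add: power2_eq_square)
    with \<open>1 \<le> x\<close> show ?thesis by linarith
  qed (simp add: x_def)
  have odd: "2*x - 3 \<noteq> 0" "2*x - 1 \<noteq> 0" "2*x + 1 \<noteq> 0" "x + 1 \<noteq> 0"
    using two_real_minus_odd_ne_zero[of m 1] two_real_minus_odd_ne_zero[of m 0] by (simp_all add: x_def)
  have rec: "(2*x+2)*(6*x^2-x-3) * central_sum (Suc m) = (6*x^2+11*x+2)*(2*x-3) * central_sum m"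
    using central_sum_rec[of m] by (simp add: x_def)
  have IH: "central_sum m * ((2*x - 3)*(2*x - 1)*P) = real (2*m choose m) * (6*x^2 - x - 3)"
  proof -
    have "(2*x - 3)*(2*x - 1)*P \<noteq> 0" using odd by (simp add: P_def)
    with Suc.IH show ?thesis by (simp add: x_def P_def nonzero_eq_divide_eq)
  qed
  have binom: "real (2*Suc m choose Suc m) * (x + 1) = 2*(2*x + 1) * real (2*m choose m)"
    using odd_central_binomial[of m] unfolding central_binomial_Suc by (simp add: x_def algebra_simps)
  have "central_sum (Suc m) * ((2*x + 1)*(2*x - 1)*(4*P))
      = real (2*Suc m choose Suc m) * (6*(x+1)^2 - (x+1) - 3)"
    using rec IH binom p odd(1,4) by algebra
  moreover have "(2*x + 1)*(2*x - 1)*(4*P) \<noteq> 0" using odd by (simp add: P_def)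
  ultimately show ?case by (simp add: x_def P_def nonzero_eq_divide_eq algebra_simps)
qed

definition harm_sum_term :: "nat \<Rightarrow> nat \<Rightarrow> real" where
  "harm_sum_term n k = (-1/4)^k * real (n choose k) * real ((1 + 2*k) choose k) * real k"

definition harm_sum :: "nat \<Rightarrow> real" where
  "harm_sum n = (\<Sum>k=0..n. harm_sum_term n k * harm (1 + 2*k))"

definition harm_cert :: "nat \<Rightarrow> nat \<Rightarrow> real" where
  "harm_cert n k = -2 * ((real k)^2 - 1) * harm_sum_term (Suc n) k"

text \<open>With \<open>t = (-1/4)\<^sup>k\<close>, \<open>b = C(n+1,k)\<close>, \<open>x = C(n,k)\<close>, \<open>y = C(n+1,k+1)\<close>,
\<open>c = C(2k+1,k)\<close> and \<open>z = C(2k+3,k+1)\<close>.\<close>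

lemma harm_cert_identity:
  fixes n k t b c x y z :: real
  assumes "x*(n+1) = b*(n+1-k)" and "y*(k+1) = b*(n+1-k)" and "z*(k+2) = 2*(2*k+3)*c"
  shows "2*n*(n+2)*(t*b*c*k) - (2*n-1)*(n+1)*(t*x*c*k)
       = -2*((1+k)^2-1)*(-1/4*t*y*z*(1+k)) - -2*(k^2-1)*(t*b*c*k)"
  using assms by algebra

lemma harm_cert_telescopes:
  "2*real n*(real n+2) * harm_sum_term (Suc n) k - (2*real n-1)*(real n+1) * harm_sum_term n k
     = harm_cert n (Suc k) - harm_cert n k"
proof -
  have "real (Suc n choose Suc k)*(real k+1) = real (Suc n choose k)*(real n+1-real k)"
    using real_choose_mult_Suc_comp[of n k] real_choose_mult_Suc[of n k] by linarith
  from harm_cert_identity[OF real_choose_mult_Suc_comp this odd_central_binomial_Suc]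
  show ?thesis
    unfolding harm_cert_def harm_sum_term_def power_Suc of_nat_Suc by simp
qed

lemma harm_odd_Suc:
  "harm (1 + 2*Suc k) - harm (1 + 2*k) = inverse (2*real k + 2) + inverse (2*real k + 3 :: real)"
proof -
  have "1 + 2*Suc k = Suc (Suc (1 + 2*k))" by simp
  then show ?thesis by (simp add: harm_Suc algebra_simps)
qed

text \<open>With \<open>T = (-1/4)\<^sup>k\<^sup>+\<^sup>1 C(n+1,k+1)\<close>, \<open>z = C(2k+3,k+1)\<close>, \<open>w = C(2k+2,k+1)\<close>.\<close>

lemma harm_cert_diff_identity:
  fixes k T z w i1 i2 :: real
  assumes "z*(k+2) = (2*k+3)*w" and "(2*k+2)*i1 = 1" and "(2*k+3)*i2 = 1"
  shows "-2*((1+k)^2 - 1)*(T*z*(1+k))*(i1 + i2) = - (T*w*(1+k-1)*(4*(1+k)+1))"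
  using assms by algebra

lemma harm_cert_times_harm_diff:
  "harm_cert n (Suc k) * (harm (1 + 2*Suc k) - harm (1 + 2*k)) = - central_sum_term (Suc n) (Suc k)"
proof -
  have "real ((1 + 2*Suc k) choose Suc k) * (real k + 2) = (2*real k + 3) * real (2*Suc k choose Suc k)"
    using odd_central_binomial[of "Suc k"] by (simp add: algebra_simps)
  moreover have "(2*real k + 2) * inverse (2*real k + 2) = 1" "(2*real k + 3) * inverse (2*real k + 3) = 1"
    by (simp_all add: add_pos_pos)
  ultimately show ?thesis
    unfolding harm_odd_Suc harm_cert_def harm_sum_term_def central_sum_term_def of_nat_Suc
    by (rule harm_cert_diff_identity)
qed

lemma harm_sum_rec:
  "2*real n*(real n+2) * harm_sum (Suc n) - (2*real n-1)*(real n+1) * harm_sum n = central_sum (Suc n) + 1"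
proof -
  define h :: "nat \<Rightarrow> real" where "h k = harm (1 + 2*k)" for k
  have S: "harm_sum n = (\<Sum>k=0..Suc n. harm_sum_term n k * h k)"
    by (simp add: harm_sum_def h_def harm_sum_term_def)
  have S': "harm_sum (Suc n) = (\<Sum>k=0..Suc n. harm_sum_term (Suc n) k * h k)"
    by (simp add: harm_sum_def h_def)
  have boundary: "harm_cert n (Suc (Suc n)) = 0" "harm_cert n 0 = 0"
    by (simp_all add: harm_cert_def harm_sum_term_def)
  have "2*real n*(real n+2) * harm_sum (Suc n) - (2*real n-1)*(real n+1) * harm_sum n
      = (\<Sum>k=0..Suc n. (harm_cert n (Suc k) - harm_cert n k) * h k)"
    unfolding S S' sum_distrib_left sum_subtractf[symmetric] harm_cert_telescopes[symmetric]
    by (rule sum.cong) (simp_all add: algebra_simps)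
  also have "\<dots> = - (\<Sum>k=0..Suc n. harm_cert n (Suc k) * (h (Suc k) - h k))"
    unfolding sum_by_parts_telescoping boundary by simp
  also have "\<dots> = (\<Sum>k=0..Suc n. central_sum_term (Suc n) (Suc k))"
    unfolding h_def harm_cert_times_harm_diff sum_negf by simp
  also have "\<dots> = (\<Sum>j=0..Suc (Suc n). central_sum_term (Suc n) j) - central_sum_term (Suc n) 0"
    by (simp only: sum.atLeast0_atMost_Suc_shift[of _ "Suc n"]) simp
  also have "\<dots> = central_sum (Suc n) + 1"
    by (simp add: central_sum_def central_sum_term_def)
  finally show ?thesis .
qed

definition harm_sum_closed :: "nat \<Rightarrow> real" where
  "harm_sum_closed n = 3 * real n / (2^(1 + 2*n) * (1 - 4 * (real n)^2)) * real ((1 + 2*n) choose n)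
           * (3 * harm n - 4 * harm (1 + 2*n) - 16 * real n / (1 - 4 * (real n)^2)
              - (2 - 14 * real n) / (3 * real n))
         + 1 / (1 + real n)"

lemma harm_sum_closed_rec:
  assumes "n \<ge> 1"
  shows "2*real n*(real n+2) * harm_sum_closed (Suc n) - (2*real n-1)*(real n+1) * harm_sum_closed n
       = central_sum (Suc n) + 1"
proof -
  define r x y B P where "r = real n" and "x = (harm n :: real)" and "y = (harm (1 + 2*n) :: real)"
    and "B = real ((1 + 2*n) choose n)" and "P = (2::real)^(1 + 2*n)"
  have r: "r \<ge> 1" "P > 0" using assms by (simp_all add: r_def P_def)
  have nz: "1 - 4*r^2 \<noteq> 0" "1 - 4*(1 + r)^2 \<noteq> 0" "2*r - 1 \<noteq> 0" "2*r + 3 \<noteq> 0"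
  proof -
    have "r^2 \<ge> 1" using r by (simp add: one_le_power)
    then show "1 - 4*r^2 \<noteq> 0" "1 - 4*(1 + r)^2 \<noteq> 0" "2*r - 1 \<noteq> 0" "2*r + 3 \<noteq> 0"
      using r by (simp_all add: power2_eq_square algebra_simps)
  qed
  have R': "harm_sum_closed (Suc n) = 3*(1 + r)/(4*P*(1 - 4*(1 + r)^2)) * (2*(2*r + 3)*B/(r + 2))
      * (3*(x + inverse (1 + r)) - 4*(y + inverse (2*r + 2) + inverse (2*r + 3))
         - 16*(1 + r)/(1 - 4*(1 + r)^2) - (2 - 14*(1 + r))/(3*(1 + r))) + 1/(1 + (1 + r))"
  proof -
    have "real ((1 + 2*Suc n) choose Suc n) = 2*(2*r + 3)*B/(r + 2)"
      using odd_central_binomial_Suc[of n] by (simp add: r_def B_def field_simps)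
    moreover have "harm (1 + 2*Suc n) = y + inverse (2*r + 2) + inverse (2*r + 3)"
      using harm_odd_Suc[of n] by (simp add: y_def r_def)
    moreover have "(2::real)^(1 + 2*Suc n) = 4*P" by (simp add: P_def)
    ultimately show ?thesis
      unfolding harm_sum_closed_def harm_Suc of_nat_Suc r_def[symmetric] x_def[symmetric] by simp
  qed
  have R: "harm_sum_closed n = 3*r/(P*(1 - 4*r^2)) * B * (3*x - 4*y - 16*r/(1 - 4*r^2)
      - (2 - 14*r)/(3*r)) + 1/(1 + r)"
    by (simp add: harm_sum_closed_def r_def x_def y_def B_def P_def)
  have U: "central_sum (Suc n)
      = 2*B*(6*(1 + r)^2 - (1 + r) - 3) / ((2*(1 + r) - 3)*(2*(1 + r) - 1)*(2*P))"
  proof -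
    have pow: "(4::real)^Suc n = 2*P" by (simp add: P_def power_mult)
    show ?thesis
      unfolding central_sum_eq central_binomial_Suc of_nat_Suc r_def[symmetric] B_def[symmetric] pow ..
  qed
  have nz': "2*(1 + r) - 3 \<noteq> 0" "2*(1 + r) - 1 \<noteq> 0" "r \<noteq> 0" "r + 2 \<noteq> 0" "1 + r \<noteq> 0"
    "2*r + 2 \<noteq> 0" "1 + (1 + r) \<noteq> 0" using r by simp_all
  show ?thesis
    unfolding r_def[symmetric] R R' U using r(2) nz nz'
    by (simp add: divide_simps) (simp add: algebra_simps power2_eq_square)
qed

lemma harm_sum_eq_closed: "n \<ge> 1 \<Longrightarrow> harm_sum n = harm_sum_closed n"
proof (induction n rule: nat_induct_at_least)
  case base
  have harm_3: "harm 3 = (11/6::real)"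
    by (simp add: harm_def numeral_3_eq_3)
  have "harm_sum 1 = -11/8"
    by (simp add: harm_sum_def harm_sum_term_def harm_3)
  moreover have "harm_sum_closed 1 = -11/8"
    by (simp add: harm_sum_closed_def harm_expand harm_3[unfolded numeral_3_eq_3])
  ultimately show ?case by (rule trans[OF _ sym])
next
  case (Suc n)
  have "2*real n*(real n+2) * harm_sum (Suc n) = 2*real n*(real n+2) * harm_sum_closed (Suc n)"
    using harm_sum_rec[of n, unfolded Suc.IH] harm_sum_closed_rec[OF Suc.hyps] by linarith
  moreover have "2*real n*(real n+2) \<noteq> 0" using Suc.hyps by simp
  ultimately show ?case by simp
qed

theorem theorem11:
  fixes n :: nat
  assumes "n \<ge> 1"
  shows "(\<Sum>k=0..n. (-1/4::real)^k * real (n choose k) * real ((1 + 2*k) choose k)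
            * real k * harm (1 + 2*k))
       = 3 * real n / (2^(1 + 2*n) * (1 - 4 * (real n)^2)) * real ((1 + 2*n) choose n)
           * (3 * harm n - 4 * harm (1 + 2*n) - 16 * real n / (1 - 4 * (real n)^2)
              - (2 - 14 * real n) / (3 * real n))
         + 1 / (1 + real n)"
  using harm_sum_eq_closed[OF assms] by (simp only: harm_sum_def harm_sum_term_def harm_sum_closed_def)

end
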